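(* Let $P$ be a planar cyclic polygon with positive edge lengths $l_1,\dots,l_n$ such that (1) no two consecutive vertices are antipodal with respect to the circumscribed circle, and (2) $P$ does not lie on a straight line. Then $P$ is a nondegenerate (Morse) critical point of the oriented area $\mathcal A$ on $\mathbf L(l_1,\dots,l_n)$ if and only if $P$ is not a bifurcating polygon, i.e. iff $\sum_{i=1}^n\varepsilon_i\tan\alpha_i\neq0$.
   Context: $\mathbf L(l_1,\dots,l_n)$ is the space of planar polygons (closed broken lines with cyclically numbered vertices $v_1,\dots,v_n$) with $|v_iv_{i+1}|=l_i$, modulo translations and rotations. The oriented area is $\mathcal A=\frac12\sum_i(x_iy_{i+1}-x_{i+1}y_i)$ for $v_i=(x_i,y_i)$. A polygon is cyclic if all vertices lie on a circle with center $O$. $\alpha_i$ is half of the unoriented positive angle between $\overrightarrow{Ov_i}$ and $\overrightarrow{Ov_{i+1}}$; $\varepsilon_i=1$ if $O$ lies to the left of $\overrightarrow{v_iv_{i+1}}$ and $-1$ if to the right. $P$ is bifurcating if $\sum_{i=1}^n\varepsilon_i\tan\alpha_i=0$. *)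

theory Defs
  imports "HOL-Analysis.Analysis"
begin

text \<open>A planar n-gon is given by its vertices v 0, ..., v (n-1) as complex numbers
  (the plane R^2 identified with C); indices are cyclic: the successor of vertex i is
  vertex (Suc i mod n). Values of v at indices >= n are irrelevant.\<close>

definition nxt :: "nat \<Rightarrow> nat \<Rightarrow> nat" where
  "nxt n i = Suc i mod n"

definition poly_area :: "nat \<Rightarrow> (nat \<Rightarrow> complex) \<Rightarrow> real" where
  "poly_area n v = (1/2) * (\<Sum>i<n. Re (v i) * Im (v (nxt n i)) - Re (v (nxt n i)) * Im (v i))"

text \<open>Side-length constraint functions: the configuration space of polygons with side
  lengths l is the common zero set of these, and L(l) is its quotient by translations and
  rotations.\<close>
definition side_constr :: "nat \<Rightarrow> (nat \<Rightarrow> real) \<Rightarrow> nat \<Rightarrow> (nat \<Rightarrow> complex) \<Rightarrow> real" where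
  "side_constr n l i w = (cmod (w (nxt n i) - w i))\<^sup>2 - (l i)\<^sup>2"

definition dderiv :: "((nat \<Rightarrow> complex) \<Rightarrow> real) \<Rightarrow> (nat \<Rightarrow> complex) \<Rightarrow> (nat \<Rightarrow> complex) \<Rightarrow> real" where
  "dderiv f v u = deriv (\<lambda>t. f (\<lambda>i. v i + of_real t * u i)) 0"

definition dderiv2 :: "((nat \<Rightarrow> complex) \<Rightarrow> real) \<Rightarrow> (nat \<Rightarrow> complex) \<Rightarrow> (nat \<Rightarrow> complex)
    \<Rightarrow> (nat \<Rightarrow> complex) \<Rightarrow> real" where
  "dderiv2 f v u w = deriv (\<lambda>s. deriv (\<lambda>t. f (\<lambda>i. v i + of_real t * u i + of_real s * w i)) 0) 0"

definition tangent_sp :: "nat \<Rightarrow> (nat \<Rightarrow> real) \<Rightarrow> (nat \<Rightarrow> complex) \<Rightarrow> (nat \<Rightarrow> complex) set" where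
  "tangent_sp n l v = {u. \<forall>i<n. dderiv (side_constr n l i) v u = 0}"

text \<open>Tangent space of the orbit of v under translations and rotations.\<close>
definition orbit_tangent :: "nat \<Rightarrow> (nat \<Rightarrow> complex) \<Rightarrow> (nat \<Rightarrow> complex) set" where
  "orbit_tangent n v = {u. \<exists>a::complex. \<exists>c::real. \<forall>i<n. u i = a + of_real c * \<i> * v i}"

text \<open>v represents a nondegenerate (Morse) critical point of the oriented area on L(l):
  v lies in the configuration space, it is a constrained critical point (Lagrange
  multipliers lam), and the Hessian of the Lagrangian restricted to the tangent space has
  radical exactly the orbit directions, i.e. the Hessian on the quotient L(l) is
  nondegenerate.\<close>
definition morse_critical_area :: "nat \<Rightarrow> (nat \<Rightarrow> real) \<Rightarrow> (nat \<Rightarrow> complex) \<Rightarrow> bool" where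
  "morse_critical_area n l v \<longleftrightarrow>
     (\<forall>i<n. side_constr n l i v = 0) \<and>
     (\<exists>lam :: nat \<Rightarrow> real.
        (\<forall>u. dderiv (poly_area n) v u = (\<Sum>i<n. lam i * dderiv (side_constr n l i) v u)) \<and>
        (\<forall>u \<in> tangent_sp n l v.
           (\<forall>w \<in> tangent_sp n l v.
              dderiv2 (poly_area n) v u w - (\<Sum>i<n. lam i * dderiv2 (side_constr n l i) v u w) = 0)
           \<longrightarrow> u \<in> orbit_tangent n v))"

definition cyclic_with_center :: "nat \<Rightarrow> (nat \<Rightarrow> complex) \<Rightarrow> complex \<Rightarrow> bool" where
  "cyclic_with_center n v ctr \<longleftrightarrow> (\<exists>r. \<forall>i<n. cmod (v i - ctr) = r)"

definition half_angle :: "nat \<Rightarrow> (nat \<Rightarrow> complex) \<Rightarrow> complex \<Rightarrow> nat \<Rightarrow> real" where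
  "half_angle n v ctr i =
     arccos (Re (cnj (v i - ctr) * (v (nxt n i) - ctr)) / (cmod (v i - ctr) * cmod (v (nxt n i) - ctr))) / 2"

text \<open>epsilon_i = 1 if ctr lies to the left of the directed edge v_i -> v_{i+1}, -1 if to the right
  (ctr never lies on the edge line under the hypotheses of the theorem).\<close>
definition eps_side :: "nat \<Rightarrow> (nat \<Rightarrow> complex) \<Rightarrow> complex \<Rightarrow> nat \<Rightarrow> real" where
  "eps_side n v ctr i = (if Im (cnj (v (nxt n i) - v i) * (ctr - v i)) > 0 then 1 else -1)"

definition bifurcating :: "nat \<Rightarrow> (nat \<Rightarrow> complex) \<Rightarrow> complex \<Rightarrow> bool" where
  "bifurcating n v ctr \<longleftrightarrow> (\<Sum>i<n. eps_side n v ctr i * tan (half_angle n v ctr i)) = 0"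

end

theory Submission
  imports Defs
begin

text \<open>Write p_i = v_i - O and c_i = p_i x p_(i+1). The area is critical on the cyclic polygon with
  Lagrange multipliers c_i / (2 l_i^2), and on the tangent space the Hessian of the Lagrangian is
  H(u, w) = sum_i s_i(w) D_i(u . p), where s_i(w) is the angular speed of edge i under w and D_i is
  the forward difference. The vectors (s_i(w)) run through all linear relations among the edges, so
  u is in the radical iff (u_i - m) . p_i = k for some vector m and constant k. For such u the
  forward differences of B_i = p_i x (u_i - m) are -2 k eps_i tan alpha_i, and summing around the
  polygon gives k * sum_i eps_i tan alpha_i = 0. If the sum is nonzero then k = 0, B is constant,
  and u is an infinitesimal rotation plus translation. If the sum vanishes, prefix sums of
  -2 eps_i tan alpha_i give a radical vector with u_i . p_i = r^2, and no rigid motion has constant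
  radial component along a non-collinear circle polygon.\<close>

section \<open>Plane algebra in complex coordinates\<close>

definition cross :: "complex \<Rightarrow> complex \<Rightarrow> real" where
  "cross a b = Re a * Im b - Im a * Re b"

lemma cross_diff_right: "cross a (x - y) = cross a x - cross a y"
  unfolding cross_def by (simp add: algebra_simps)

lemma lagrange_identity: "(a \<bullet> b)\<^sup>2 + (cross a b)\<^sup>2 = (a \<bullet> a) * (b \<bullet> b)"
  unfolding inner_complex_def cross_def by (simp add: algebra_simps power2_eq_square)

lemma inner_cross_rotate:
  "cross e (\<i> * of_real s * e) = s * (e \<bullet> e)" "e \<bullet> (\<i> * of_real s * e) = 0" "(\<i> * of_real s * e) \<bullet> e = 0"
  unfolding inner_complex_def cross_def by (simp_all add: algebra_simps)

lemma cramer_rule: "of_real (cross a b) * x = of_real (cross x b) * a + of_real (cross a x) * b"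
  unfolding cross_def by (simp add: complex_eq_iff algebra_simps)

lemma polar_decomposition:
  "of_real (p \<bullet> p) * x = (of_real (p \<bullet> x) + \<i> * of_real (cross p x)) * p"
  unfolding inner_complex_def cross_def by (simp add: complex_eq_iff algebra_simps)

lemma cross_add_chord:
  assumes "p \<bullet> p = q \<bullet> q"
  shows "((q - p) \<bullet> (q - p)) * cross (p + q) x = 2 * cross p q * ((q - p) \<bullet> x)"
  using assms unfolding inner_complex_def cross_def by simp algebra

lemma edge_hessian_identity:
  assumes "(q - p) \<bullet> (y - x) = 0" "(q - p) \<bullet> d = 0"
  shows "((q - p) \<bullet> (q - p)) * (cross (x + y) d / 2) - cross p q * (d \<bullet> (y - x))
      = cross (q - p) d * (y \<bullet> q - x \<bullet> p)"
  using assms unfolding inner_complex_def cross_def by simp algebra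

lemma radial_cross_increment:
  assumes "p \<bullet> p = s" "q \<bullet> q = s" "x \<bullet> p = k" "y \<bullet> q = k"
  shows "s * ((q - p) \<bullet> (y - x)) = k * ((q - p) \<bullet> (q - p)) + cross p q * (cross q y - cross p x)"
proof -
  have "of_real s * (y - x) = of_real k * (q - p) + \<i> * (of_real (cross q y) * q - of_real (cross p x) * p)"
    using polar_decomposition[of p x] polar_decomposition[of q y] assms
    by (simp add: inner_commute algebra_simps)
  then have "(q - p) \<bullet> (of_real s * (y - x))
      = (q - p) \<bullet> (of_real k * (q - p) + \<i> * (of_real (cross q y) * q - of_real (cross p x) * p))"
    by simp
  then show ?thesis unfolding inner_complex_def cross_def by (simp add: algebra_simps)
qed

lemma inner_edge_rotation:
  "(q - p) \<bullet> ((q + \<i> * of_real b' * q) - (p + \<i> * of_real b * p))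
   = (q - p) \<bullet> (q - p) + cross p q * (b' - b)"
  unfolding inner_complex_def cross_def by (simp add: algebra_simps)

lemma cross_eq_0_on_circle:
  assumes "cmod p = cmod q" "cross p q = 0"
  shows "q = p \<or> q = - p"
proof -
  have "(p \<bullet> q)\<^sup>2 = (p \<bullet> p)\<^sup>2"
    using lagrange_identity[of p q] assms by (simp add: dot_square_norm power2_eq_square)
  then have "p \<bullet> q = p \<bullet> p \<or> p \<bullet> q = - (p \<bullet> p)"
    by (simp add: power2_eq_iff)
  moreover have "q \<bullet> q = p \<bullet> p" using assms(1) by (simp add: dot_square_norm)
  then have "(q - p) \<bullet> (q - p) = 2 * (p \<bullet> p) - 2 * (p \<bullet> q)"
    "(q + p) \<bullet> (q + p) = 2 * (p \<bullet> p) + 2 * (p \<bullet> q)"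
    by (simp_all add: inner_add inner_diff inner_commute)
  ultimately show ?thesis by (auto simp: add_eq_0_iff)
qed

lemma signed_tan_half_angle:
  assumes "cmod p = cmod q" "q \<noteq> p" "q \<noteq> - p"
  shows "(if cross p q > 0 then 1 else - 1) * tan (arccos ((p \<bullet> q) / (cmod p * cmod q)) / 2)
     = (p \<bullet> p - p \<bullet> q) / cross p q"
proof -
  define r2 where "r2 = p \<bullet> p"
  have c0: "cross p q \<noteq> 0" using cross_eq_0_on_circle assms by blast
  have r2_pos: "r2 > 0" using assms c0 by (auto simp: r2_def cross_def)
  have qq: "q \<bullet> q = r2" using assms(1) by (simp add: r2_def dot_square_norm)
  have lag: "(p \<bullet> q)\<^sup>2 + (cross p q)\<^sup>2 = r2\<^sup>2"
    using lagrange_identity[of p q] qq r2_def by (simp add: power2_eq_square)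
  define x where "x = (p \<bullet> q) / r2"
  have angle: "(p \<bullet> q) / (cmod p * cmod q) = x"
    using assms(1) by (simp add: x_def r2_def dot_square_norm power2_eq_square)
  have "(p \<bullet> q)\<^sup>2 < r2\<^sup>2"
    using lag c0 by (smt (verit) zero_less_power2)
  then have "x\<^sup>2 < 1"
    using r2_pos by (simp add: x_def power_divide)
  then have x_bounds: "-1 < x" "x < 1" by (smt (verit) one_le_power power2_minus)+
  have "1 - x\<^sup>2 = (\<bar>cross p q\<bar> / r2)\<^sup>2"
    using lag r2_pos by (simp add: x_def field_simps)
  then have sin: "sin (arccos x) = \<bar>cross p q\<bar> / r2"
    using r2_pos x_bounds by (simp add: sin_arccos)
  have "tan (arccos x / 2) = sin (arccos x) / (cos (arccos x) + 1)"
    using tan_half[of "arccos x / 2"] by simp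
  also have "\<dots> = \<bar>cross p q\<bar> / (p \<bullet> q + r2)"
    using sin x_bounds r2_pos by (simp add: x_def field_simps)
  finally have tan: "tan (arccos x / 2) = \<bar>cross p q\<bar> / (p \<bullet> q + r2)" .
  have ne: "p \<bullet> q + r2 \<noteq> 0" using x_bounds r2_pos by (simp add: x_def field_simps)
  have "cross p q / (p \<bullet> q + r2) = (r2 - p \<bullet> q) / cross p q"
    using c0 ne lag by (simp add: field_simps power2_eq_square)
  then show ?thesis unfolding angle tan r2_def[symmetric] by (auto simp: abs_if)
qed

lemma sum_nxt_reindex:
  fixes f :: "nat \<Rightarrow> 'a::comm_monoid_add"
  assumes "0 < n"
  shows "(\<Sum>k<n. f (nxt n k)) = (\<Sum>k<n. f k)"
proof -
  obtain m where n: "n = Suc m" using assms by (cases n) auto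
  have "(\<Sum>k<n. f (nxt n k)) = (\<Sum>k<m. f (Suc k)) + f 0"
    by (simp add: n nxt_def)
  also have "\<dots> = (\<Sum>k<n. f k)"
    unfolding n sum.lessThan_Suc_shift by (simp add: add.commute)
  finally show ?thesis .
qed

lemma sum_nxt_diff_eq_0:
  fixes f :: "nat \<Rightarrow> 'a::ab_group_add"
  assumes "0 < n"
  shows "(\<Sum>k<n. f (nxt n k) - f k) = 0"
  using sum_nxt_reindex[OF assms, of f] by (simp add: sum_subtractf)

lemma prefix_sum_nxt_diff:
  fixes F :: "nat \<Rightarrow> 'a::ab_group_add"
  assumes "(\<Sum>m<n. F m) = 0" "k < n"
  shows "(\<Sum>m<nxt n k. F m) - (\<Sum>m<k. F m) = F k"
proof (cases "Suc k < n")
  case True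
  then show ?thesis by (simp add: nxt_def)
next
  case False
  then have "n = Suc k" using assms(2) by simp
  then show ?thesis using assms(1) by (simp add: nxt_def add_eq_0_iff)
qed

lemma nxt_invariant_const:
  assumes "\<forall>k<n. \<phi> (nxt n k) = \<phi> k" "k < n"
  shows "\<phi> k = \<phi> 0"
  using assms(2)
proof (induction k)
  case (Suc k)
  then show ?case using assms(1)[rule_format, of k] by (simp add: nxt_def)
qed simp

section \<open>Directional derivatives of the area and the side constraints\<close>

lemma deriv_quadratic_at_0:
  fixes f :: "real \<Rightarrow> real"
  assumes "\<And>t. f t = a + b * t + c * t\<^sup>2"
  shows "deriv f 0 = b"
proof -
  have "((\<lambda>t. a + b * t + c * t\<^sup>2) has_real_derivative b) (at 0)"
    by (auto intro!: derivative_eq_intros)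
  moreover have "f = (\<lambda>t. a + b * t + c * t\<^sup>2)" using assms by auto
  ultimately show ?thesis by (simp add: DERIV_imp_deriv)
qed

lemma dderiv2_of_quadratic:
  assumes "\<And>x y t. f (\<lambda>i. x i + of_real t * y i) = f x + B x y * t + Q y * t\<^sup>2"
    and "\<And>x y z s. B (\<lambda>i. x i + of_real s * y i) z = B x z + B y z * s"
  shows "dderiv f v u = B v u" "dderiv2 f v u w = B w u"
proof -
  show "dderiv f v u = B v u"
    unfolding dderiv_def by (rule deriv_quadratic_at_0) (rule assms(1))
  have first: "deriv (\<lambda>t. f (\<lambda>i. v i + of_real t * u i + of_real s * w i)) 0 = B v u + B w u * s" for s
  proof -
    have "f (\<lambda>i. v i + of_real t * u i + of_real s * w i)
        = f (\<lambda>i. v i + of_real s * w i) + (B v u + B w u * s) * t + Q u * t\<^sup>2" for t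
      using assms(1)[of "\<lambda>i. v i + of_real s * w i" t u] assms(2)
      by (simp add: algebra_simps)
    then show ?thesis by (rule deriv_quadratic_at_0)
  qed
  show "dderiv2 f v u w = B w u"
    unfolding dderiv2_def by (rule deriv_quadratic_at_0[where c = 0]) (simp add: first)
qed

definition area_polar :: "nat \<Rightarrow> (nat \<Rightarrow> complex) \<Rightarrow> (nat \<Rightarrow> complex) \<Rightarrow> real" where
  "area_polar n x y = (1/2) * (\<Sum>i<n. cross (x i) (y (nxt n i)) + cross (y i) (x (nxt n i)))"

lemma poly_area_eq: "poly_area n x = (1/2) * (\<Sum>i<n. cross (x i) (x (nxt n i)))"
  unfolding poly_area_def cross_def by (simp add: algebra_simps)

lemma poly_area_line:
  "poly_area n (\<lambda>i. x i + of_real t * y i) = poly_area n x + area_polar n x y * t + poly_area n y * t\<^sup>2"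
proof -
  have cross_line:
    "cross (a + of_real t * b) (c + of_real t * d) = cross a c + (cross a d + cross b c) * t + cross b d * t\<^sup>2"
    for a b c d unfolding cross_def by (simp add: algebra_simps power2_eq_square)
  show ?thesis
    unfolding poly_area_eq area_polar_def cross_line by (simp add: sum.distrib sum_distrib_left algebra_simps)
qed

lemma area_polar_line:
  "area_polar n (\<lambda>i. x i + of_real s * y i) z = area_polar n x z + area_polar n y z * s"
proof -
  have "cross (x i + of_real s * y i) (z (nxt n i)) + cross (z i) (x (nxt n i) + of_real s * y (nxt n i))
     = (cross (x i) (z (nxt n i)) + cross (z i) (x (nxt n i)))
       + s * (cross (y i) (z (nxt n i)) + cross (z i) (y (nxt n i)))" for i
    unfolding cross_def by (simp add: algebra_simps)
  then show ?thesis
    unfolding area_polar_def by (simp add: sum.distrib sum_distrib_left algebra_simps)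
qed

lemma dderiv_poly_area: "dderiv (poly_area n) v u = area_polar n v u"
  using poly_area_line area_polar_line by (rule dderiv2_of_quadratic(1)[where B = "area_polar n"])

lemma dderiv2_poly_area: "dderiv2 (poly_area n) v u w = area_polar n w u"
  using poly_area_line area_polar_line by (rule dderiv2_of_quadratic(2)[where B = "area_polar n"])

lemma area_polar_commute: "area_polar n x y = area_polar n y x"
  unfolding area_polar_def by (simp add: add.commute)

lemma area_polar_eq:
  assumes "0 < n"
  shows "area_polar n x y = (1/2) * (\<Sum>i<n. cross (x i + x (nxt n i)) (y (nxt n i) - y i))"
proof -
  have "cross (x i + x (nxt n i)) (y (nxt n i) - y i) =
     (cross (x i) (y (nxt n i)) + cross (y i) (x (nxt n i))) + (cross (x (nxt n i)) (y (nxt n i)) - cross (x i) (y i))"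
    for i unfolding cross_def by (simp add: algebra_simps)
  then show ?thesis
    unfolding area_polar_def using sum_nxt_diff_eq_0[OF assms, of "\<lambda>i. cross (x i) (y i)"]
    by (simp add: sum.distrib)
qed

lemma side_constr_line:
  "side_constr n l i (\<lambda>j. x j + of_real t * y j) = side_constr n l i x
     + 2 * ((x (nxt n i) - x i) \<bullet> (y (nxt n i) - y i)) * t
     + ((y (nxt n i) - y i) \<bullet> (y (nxt n i) - y i)) * t\<^sup>2"
  unfolding side_constr_def inner_complex_def cmod_power2
  by (simp add: algebra_simps power2_eq_square)

lemma side_polar_line:
  fixes x y z :: "nat \<Rightarrow> complex"
  shows
  "2 * ((x (nxt n i) + of_real s * y (nxt n i) - (x i + of_real s * y i)) \<bullet> (z (nxt n i) - z i))
   = 2 * ((x (nxt n i) - x i) \<bullet> (z (nxt n i) - z i)) + 2 * ((y (nxt n i) - y i) \<bullet> (z (nxt n i) - z i)) * s"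
  unfolding inner_complex_def by (simp add: algebra_simps)

lemma dderiv_side_constr:
  "dderiv (side_constr n l i) v u = 2 * ((v (nxt n i) - v i) \<bullet> (u (nxt n i) - u i))"
  using side_constr_line side_polar_line
  by (rule dderiv2_of_quadratic(1)[where B = "\<lambda>x z. 2 * ((x (nxt n i) - x i) \<bullet> (z (nxt n i) - z i))"
      and Q = "\<lambda>y. (y (nxt n i) - y i) \<bullet> (y (nxt n i) - y i)"])

lemma dderiv2_side_constr:
  "dderiv2 (side_constr n l i) v u w = 2 * ((w (nxt n i) - w i) \<bullet> (u (nxt n i) - u i))"
  using side_constr_line side_polar_line
  by (rule dderiv2_of_quadratic(2)[where B = "\<lambda>x z. 2 * ((x (nxt n i) - x i) \<bullet> (z (nxt n i) - z i))"
      and Q = "\<lambda>y. (y (nxt n i) - y i) \<bullet> (y (nxt n i) - y i)"])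

section \<open>Edges of a non-collinear polygon\<close>

lemma cross_eq_0_imp_parallel:
  assumes "d \<noteq> 0" "cross d x = 0"
  shows "x = of_real ((d \<bullet> x) / (d \<bullet> d)) * d"
  using polar_decomposition[of d x] assms by (simp add: field_simps)

lemma inner_eq_0_imp_orthogonal:
  assumes "d \<noteq> 0" "d \<bullet> x = 0"
  shows "x = of_real (cross d x / (d \<bullet> d)) * (\<i> * d)"
  using polar_decomposition[of d x] assms by (simp add: field_simps)

lemma collinear_if_offsets_parallel:
  fixes v :: "nat \<Rightarrow> complex"
  assumes "\<forall>k<n. \<exists>c. v k - v 0 = of_real c * d"
  shows "collinear (v ` {..<n})"
proof -
  have "\<exists>c. v k = v 0 + c *\<^sub>R d" if "k < n" for k
    using assms that by (metis add.commute diff_add_cancel scaleR_conv_of_real)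
  then show ?thesis unfolding collinear_alt by blast
qed

lemma collinear_if_edges_parallel:
  fixes v :: "nat \<Rightarrow> complex"
  assumes "\<forall>j<n. \<exists>c. v (nxt n j) - v j = of_real c * d"
  shows "collinear (v ` {..<n})"
proof -
  have "\<exists>c. v k - v 0 = of_real c * d" if "k < n" for k
    using that
  proof (induction k)
    case (Suc k)
    then obtain c c' where "v k - v 0 = of_real c * d" "v (nxt n k) - v k = of_real c' * d"
      using assms by (meson Suc_lessD)
    moreover have "nxt n k = Suc k" using Suc.prems by (simp add: nxt_def)
    ultimately have "v (Suc k) - v 0 = of_real (c + c') * d" by (simp add: algebra_simps)
    then show ?case by blast
  qed (auto intro: exI[of _ 0])
  then show ?thesis by (intro collinear_if_offsets_parallel) auto
qed

lemma collinear_if_inner_const: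
  fixes v :: "nat \<Rightarrow> complex"
  assumes "A \<noteq> 0" "\<forall>k<n. A \<bullet> v k = C"
  shows "collinear (v ` {..<n})"
proof (rule collinear_if_offsets_parallel, intro allI impI)
  fix k assume "k < n"
  then have "A \<bullet> (v k - v 0) = 0" using assms(2) by (simp add: inner_diff_right)
  then show "\<exists>c. v k - v 0 = of_real c * (\<i> * A)" using inner_eq_0_imp_orthogonal[OF assms(1)] by blast
qed

lemma non_parallel_edges:
  fixes v :: "nat \<Rightarrow> complex"
  assumes "\<not> collinear (v ` {..<n})" "0 < n" "v (nxt n 0) \<noteq> v 0"
  obtains b where "b < n" "cross (v (nxt n 0) - v 0) (v (nxt n b) - v b) \<noteq> 0"
proof -
  define d where "d = v (nxt n 0) - v 0"
  have "d \<noteq> 0" using assms(3) by (simp add: d_def)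
  show ?thesis
  proof (rule ccontr)
    assume "\<not> thesis"
    then have "\<forall>b<n. cross d (v (nxt n b) - v b) = 0" using that d_def by blast
    then have "\<forall>b<n. \<exists>c. v (nxt n b) - v b = of_real c * d"
      using cross_eq_0_imp_parallel[OF \<open>d \<noteq> 0\<close>] by blast
    then show False using collinear_if_edges_parallel assms(1) by blast
  qed
qed

lemma vanishing_on_relations_imp_inner:
  fixes e :: "nat \<Rightarrow> complex" and \<delta> :: "nat \<Rightarrow> real"
  assumes "a < n" "b < n" "cross (e a) (e b) \<noteq> 0"
    and vanish: "\<And>s. (\<Sum>i<n. of_real (s i) * e i) = 0 \<Longrightarrow> (\<Sum>i<n. s i * \<delta> i) = 0"
  obtains \<mu> where "\<And>k. k < n \<Longrightarrow> \<delta> k = \<mu> \<bullet> e k"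
proof -
  define D where "D = cross (e a) (e b)"
  have rel: "D * \<delta> k = cross (e k) (e b) * \<delta> a + cross (e a) (e k) * \<delta> b" if "k < n" for k
  proof -
    define s where "s m = (if m = k then D else 0) - (if m = a then cross (e k) (e b) else 0)
      - (if m = b then cross (e a) (e k) else 0)" for m
    have "of_real (s m) * e m = (if m = k then of_real D * e k else 0)
        - (if m = a then of_real (cross (e k) (e b)) * e a else 0)
        - (if m = b then of_real (cross (e a) (e k)) * e b else 0)"
      "s m * \<delta> m = (if m = k then D * \<delta> k else 0)
        - (if m = a then cross (e k) (e b) * \<delta> a else 0)
        - (if m = b then cross (e a) (e k) * \<delta> b else 0)" for m
      by (simp_all add: s_def algebra_simps)
    note sums = sum_subtractf[where A = "{..<n}"] this
    have "(\<Sum>m<n. of_real (s m) * e m)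
        = of_real D * e k - of_real (cross (e k) (e b)) * e a - of_real (cross (e a) (e k)) * e b"
      using that assms(1,2) by (simp add: sums)
    also have "\<dots> = 0" using cramer_rule[of "e a" "e b" "e k"] by (simp add: D_def)
    finally have "(\<Sum>m<n. s m * \<delta> m) = 0" by (rule vanish)
    then show ?thesis using that assms(1,2) by (simp add: sums)
  qed
  define \<mu> where "\<mu> = of_real (\<delta> a / D) * (- \<i> * e b) + of_real (\<delta> b / D) * (\<i> * e a)"
  have "D \<noteq> 0" using assms(3) by (simp add: D_def)
  have \<mu>_inner: "D * (\<mu> \<bullet> e k) = cross (e k) (e b) * \<delta> a + cross (e a) (e k) * \<delta> b" for k
    using \<open>D \<noteq> 0\<close> unfolding \<mu>_def inner_complex_def cross_def by (simp add: field_simps)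
  have "\<delta> k = \<mu> \<bullet> e k" if "k < n" for k
  proof -
    have "D * \<delta> k = D * (\<mu> \<bullet> e k)" by (simp only: rel[OF that] \<mu>_inner)
    then show ?thesis using \<open>D \<noteq> 0\<close> by simp
  qed
  then show ?thesis using that by blast
qed

text \<open>Test against step functions jumping across edge j and across the closing edge.\<close>

lemma edge_multiples_coincide:
  fixes e u :: "nat \<Rightarrow> complex" and \<mu> :: "nat \<Rightarrow> real"
  assumes vanish: "\<And>u. (\<Sum>i<n. \<mu> i * (e i \<bullet> (u (nxt n i) - u i))) = 0"
    and "j < n"
  shows "of_real (\<mu> j) * e j = of_real (\<mu> (n - 1)) * e (n - 1)"
proof -
  have "\<mu> j * (e j \<bullet> z) = \<mu> (n - 1) * (e (n - 1) \<bullet> z)" for z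
  proof (cases "j = n - 1")
    case False
    define u where "u i = (if i \<le> j then z else 0)" for i
    have "\<mu> i * (e i \<bullet> (u (nxt n i) - u i)) =
        (if i = n - 1 then \<mu> (n - 1) * (e (n - 1) \<bullet> z) else 0) - (if i = j then \<mu> j * (e j \<bullet> z) else 0)"
      if "i < n" for i
    proof (cases "i = n - 1")
      case True
      then show ?thesis using False \<open>j < n\<close> by (simp add: u_def nxt_def)
    next
      case False
      then show ?thesis using \<open>i < n\<close> \<open>j < n\<close> by (auto simp: u_def nxt_def)
    qed
    then have "(\<Sum>i<n. \<mu> i * (e i \<bullet> (u (nxt n i) - u i))) = \<mu> (n - 1) * (e (n - 1) \<bullet> z) - \<mu> j * (e j \<bullet> z)"
      using \<open>j < n\<close> by (simp add: sum_subtractf)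
    then show ?thesis using vanish[of u] by simp
  qed simp
  from this[of 1] this[of \<i>] show ?thesis by (simp add: complex_eq_iff)
qed

lemma edge_multipliers_eq_0:
  fixes v :: "nat \<Rightarrow> complex" and \<mu> :: "nat \<Rightarrow> real"
  assumes not_coll: "\<not> collinear (v ` {..<n})"
    and edges: "\<And>i. i < n \<Longrightarrow> v (nxt n i) \<noteq> v i"
    and vanish: "\<And>u. (\<Sum>i<n. \<mu> i * ((v (nxt n i) - v i) \<bullet> (u (nxt n i) - u i))) = 0"
    and "i < n"
  shows "\<mu> i = 0"
proof -
  define C where "C = of_real (\<mu> (n - 1)) * (v (nxt n (n - 1)) - v (n - 1))"
  have same: "of_real (\<mu> j) * (v (nxt n j) - v j) = C" if "j < n" for j
    unfolding C_def using edge_multiples_coincide[OF vanish that] .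
  have "C = 0"
  proof (rule ccontr)
    assume "C \<noteq> 0"
    have "\<exists>c. v (nxt n j) - v j = of_real c * C" if "j < n" for j
    proof
      have "\<mu> j \<noteq> 0" using same[OF that] \<open>C \<noteq> 0\<close> by auto
      then show "v (nxt n j) - v j = of_real (1 / \<mu> j) * C" using same[OF that] by (auto simp: field_simps)
    qed
    then show False using collinear_if_edges_parallel not_coll by blast
  qed
  then show ?thesis using same[OF \<open>i < n\<close>] edges[OF \<open>i < n\<close>] by simp
qed

section \<open>Cyclic polygons\<close>

locale cyclic_polygon =
  fixes n :: nat and l :: "nat \<Rightarrow> real" and v :: "nat \<Rightarrow> complex" and ctr :: complex and r :: real
  assumes lengths: "\<And>i. i < n \<Longrightarrow> l i = cmod (v (nxt n i) - v i)"
    and lengths_pos: "\<And>i. i < n \<Longrightarrow> 0 < l i"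
    and on_circle: "\<And>i. i < n \<Longrightarrow> cmod (v i - ctr) = r"
    and no_antipodal: "\<And>i. i < n \<Longrightarrow> v (nxt n i) - ctr \<noteq> - (v i - ctr)"
    and not_collinear: "\<not> collinear (v ` {..<n})"
begin

abbreviation edge :: "nat \<Rightarrow> complex" where
  "edge i \<equiv> v (nxt n i) - v i"

abbreviation radius :: "nat \<Rightarrow> complex" where
  "radius i \<equiv> v i - ctr"

definition chord_cross :: "nat \<Rightarrow> real" where
  "chord_cross i = cross (radius i) (radius (nxt n i))"

definition signed_tan :: "nat \<Rightarrow> real" where
  "signed_tan i = (r\<^sup>2 - radius i \<bullet> radius (nxt n i)) / chord_cross i"

definition multiplier :: "nat \<Rightarrow> real" where
  "multiplier i = chord_cross i / (2 * (l i)\<^sup>2)"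

definition lagrangian_hessian :: "(nat \<Rightarrow> complex) \<Rightarrow> (nat \<Rightarrow> complex) \<Rightarrow> real" where
  "lagrangian_hessian u w =
     dderiv2 (poly_area n) v u w - (\<Sum>i<n. multiplier i * dderiv2 (side_constr n l i) v u w)"

lemma n_pos: "0 < n"
  using not_collinear by (rule contrapos_np) simp

lemma nxt_in_range: "nxt n i < n"
  using n_pos by (simp add: nxt_def)

lemma edge_nonzero: "i < n \<Longrightarrow> v (nxt n i) \<noteq> v i"
  using lengths lengths_pos by fastforce

lemma edge_inner_self: "i < n \<Longrightarrow> edge i \<bullet> edge i = (l i)\<^sup>2"
  using lengths by (simp add: dot_square_norm)

lemma radius_pos: "0 < r"
proof -
  have "r \<noteq> 0"
    using on_circle[OF n_pos] on_circle[OF nxt_in_range, of 0] edge_nonzero[OF n_pos] by auto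
  then show ?thesis using on_circle[OF n_pos] by (metis norm_ge_zero order_le_less)
qed

lemma radius_inner_self: "i < n \<Longrightarrow> radius i \<bullet> radius i = r\<^sup>2"
  using on_circle by (simp add: dot_square_norm)

lemma chord_cross_nonzero:
  assumes "i < n"
  shows "chord_cross i \<noteq> 0"
proof
  assume "chord_cross i = 0"
  then have "radius (nxt n i) = radius i \<or> radius (nxt n i) = - radius i"
    using cross_eq_0_on_circle on_circle[OF assms] on_circle[OF nxt_in_range]
    unfolding chord_cross_def by metis
  then show False using edge_nonzero[OF assms] no_antipodal[OF assms] by auto
qed

lemma edge_inner_self_eq: "i < n \<Longrightarrow> edge i \<bullet> edge i = 2 * chord_cross i * signed_tan i"
  using radius_inner_self[of i] radius_inner_self[OF nxt_in_range, of i] chord_cross_nonzero[of i]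
  by (simp add: signed_tan_def inner_diff inner_commute)

lemma signed_tan_eq:
  assumes "i < n"
  shows "eps_side n v ctr i * tan (half_angle n v ctr i) = signed_tan i"
proof -
  have "Re (cnj (radius i) * radius (nxt n i)) = radius i \<bullet> radius (nxt n i)"
    "Im (cnj (v (nxt n i) - v i) * (ctr - v i)) = chord_cross i"
    by (simp_all add: inner_complex_def chord_cross_def cross_def algebra_simps)
  moreover have "cmod (radius i) = cmod (radius (nxt n i))"
    using on_circle[OF assms] on_circle[OF nxt_in_range] by simp
  ultimately show ?thesis
    using signed_tan_half_angle[of "radius i" "radius (nxt n i)"] edge_nonzero[OF assms]
      no_antipodal[OF assms] radius_inner_self[OF assms]
    by (simp add: eps_side_def half_angle_def signed_tan_def chord_cross_def)
qed

lemma bifurcating_iff: "bifurcating n v ctr \<longleftrightarrow> (\<Sum>i<n. signed_tan i) = 0"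
  unfolding bifurcating_def using signed_tan_eq by simp

lemma tangent_sp_iff: "u \<in> tangent_sp n l v \<longleftrightarrow> (\<forall>i<n. edge i \<bullet> (u (nxt n i) - u i) = 0)"
  unfolding tangent_sp_def dderiv_side_constr by simp

lemma area_gradient: "dderiv (poly_area n) v u = (\<Sum>i<n. multiplier i * dderiv (side_constr n l i) v u)"
proof -
  have summand: "cross (v i + v (nxt n i)) (u (nxt n i) - u i)
      = 2 * (multiplier i * dderiv (side_constr n l i) v u) + 2 * cross ctr (u (nxt n i) - u i)"
    if "i < n" for i
  proof -
    have "(l i)\<^sup>2 * cross (radius i + radius (nxt n i)) (u (nxt n i) - u i)
        = 2 * chord_cross i * (edge i \<bullet> (u (nxt n i) - u i))"
      using cross_add_chord[of "radius i" "radius (nxt n i)"] radius_inner_self[OF that]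
        radius_inner_self[OF nxt_in_range] edge_inner_self[OF that]
      by (simp add: chord_cross_def)
    moreover have "(l i)\<^sup>2 \<noteq> 0" using lengths_pos[OF that] by simp
    moreover have "cross (v i + v (nxt n i)) x = cross (radius i + radius (nxt n i)) x + 2 * cross ctr x" for x
      unfolding cross_def by (simp add: algebra_simps)
    ultimately show ?thesis
      by (simp add: multiplier_def dderiv_side_constr field_simps)
  qed
  have "dderiv (poly_area n) v u = (1/2) * (\<Sum>i<n. cross (v i + v (nxt n i)) (u (nxt n i) - u i))"
    by (simp add: dderiv_poly_area area_polar_eq[OF n_pos])
  also have "\<dots> = (1/2) * (\<Sum>i<n. 2 * (multiplier i * dderiv (side_constr n l i) v u)
      + 2 * cross ctr (u (nxt n i) - u i))"
    by (simp add: summand)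
  also have "\<dots> = (\<Sum>i<n. multiplier i * dderiv (side_constr n l i) v u)
      + (\<Sum>i<n. cross ctr (u (nxt n i) - u i))"
    by (simp add: sum.distrib sum_distrib_left[symmetric])
  also have "(\<Sum>i<n. cross ctr (u (nxt n i) - u i)) = 0"
    using sum_nxt_diff_eq_0[OF n_pos, of "\<lambda>i. cross ctr (u i)"] by (simp add: cross_diff_right)
  finally show ?thesis by simp
qed

lemma multiplier_unique:
  assumes "\<forall>u. dderiv (poly_area n) v u = (\<Sum>i<n. lam i * dderiv (side_constr n l i) v u)" and "i < n"
  shows "lam i = multiplier i"
proof -
  have "(\<Sum>i<n. (lam i - multiplier i) * (edge i \<bullet> (u (nxt n i) - u i))) = 0" for u
  proof -
    define X where "X i = edge i \<bullet> (u (nxt n i) - u i)" for i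
    have "dderiv (side_constr n l i) v u = 2 * X i" for i
      by (simp add: dderiv_side_constr X_def)
    moreover have "(\<Sum>i<n. lam i * dderiv (side_constr n l i) v u)
        = (\<Sum>i<n. multiplier i * dderiv (side_constr n l i) v u)"
      using assms(1) area_gradient by metis
    ultimately have "2 * (\<Sum>i<n. lam i * X i) = 2 * (\<Sum>i<n. multiplier i * X i)"
      by (simp add: sum_distrib_left mult.left_commute)
    then show ?thesis unfolding X_def[symmetric] by (simp add: left_diff_distrib sum_subtractf)
  qed
  from edge_multipliers_eq_0[where \<mu> = "\<lambda>i. lam i - multiplier i", OF not_collinear edge_nonzero this assms(2)]
  show ?thesis by simp
qed

lemma lagrangian_hessian_eq:
  assumes u: "u \<in> tangent_sp n l v" and w: "w \<in> tangent_sp n l v"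
  shows "lagrangian_hessian u w = (\<Sum>i<n. cross (edge i) (w (nxt n i) - w i) / (edge i \<bullet> edge i)
      * (u (nxt n i) \<bullet> radius (nxt n i) - u i \<bullet> radius i))"
proof -
  have summand: "cross (u i + u (nxt n i)) (w (nxt n i) - w i) / 2 - multiplier i * dderiv2 (side_constr n l i) v u w
      = cross (edge i) (w (nxt n i) - w i) / (edge i \<bullet> edge i) * (u (nxt n i) \<bullet> radius (nxt n i) - u i \<bullet> radius i)"
    if "i < n" for i
  proof -
    have "edge i \<bullet> (u (nxt n i) - u i) = 0" "edge i \<bullet> (w (nxt n i) - w i) = 0"
      using u w that by (simp_all add: tangent_sp_iff)
    then have H: "(l i)\<^sup>2 * (cross (u i + u (nxt n i)) (w (nxt n i) - w i) / 2)
        - chord_cross i * ((w (nxt n i) - w i) \<bullet> (u (nxt n i) - u i))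
        = cross (edge i) (w (nxt n i) - w i) * (u (nxt n i) \<bullet> radius (nxt n i) - u i \<bullet> radius i)"
      using edge_hessian_identity[where p = "radius i" and q = "radius (nxt n i)"] edge_inner_self[OF that]
      by (simp add: chord_cross_def)
    have "(l i)\<^sup>2 \<noteq> 0" using lengths_pos[OF that] by simp
    then have "cross (u i + u (nxt n i)) (w (nxt n i) - w i) / 2 - multiplier i * dderiv2 (side_constr n l i) v u w
        = ((l i)\<^sup>2 * (cross (u i + u (nxt n i)) (w (nxt n i) - w i) / 2)
          - chord_cross i * ((w (nxt n i) - w i) \<bullet> (u (nxt n i) - u i))) / (l i)\<^sup>2"
      by (simp add: multiplier_def dderiv2_side_constr field_simps)
    then show ?thesis unfolding H edge_inner_self[OF that] by simp
  qed
  have "lagrangian_hessian u w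
      = (\<Sum>i<n. cross (u i + u (nxt n i)) (w (nxt n i) - w i) / 2 - multiplier i * dderiv2 (side_constr n l i) v u w)"
    unfolding lagrangian_hessian_def dderiv2_poly_area area_polar_commute[of n w]
    by (simp add: area_polar_eq[OF n_pos] sum_subtractf sum_divide_distrib)
  then show ?thesis by (simp add: summand)
qed

text \<open>Tangent vectors realise every linear relation among the edges: the rotated edges
  i s_m e_m close up and are orthogonal to e_m.\<close>

lemma radical_radial_affine:
  assumes u: "u \<in> tangent_sp n l v"
    and radical: "\<forall>w \<in> tangent_sp n l v. lagrangian_hessian u w = 0"
  obtains \<mu> \<kappa> where "\<And>i. i < n \<Longrightarrow> (u i - \<mu>) \<bullet> radius i = \<kappa>"
proof -
  define \<delta> where "\<delta> i = u (nxt n i) \<bullet> radius (nxt n i) - u i \<bullet> radius i" for i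
  obtain b where b: "b < n" "cross (edge 0) (edge b) \<noteq> 0"
    using non_parallel_edges[OF not_collinear n_pos edge_nonzero[OF n_pos]] by blast
  have "(\<Sum>i<n. s i * \<delta> i) = 0" if relation: "(\<Sum>i<n. of_real (s i) * edge i) = 0" for s
  proof -
    define w where "w j = (\<Sum>m<j. \<i> * of_real (s m) * edge m)" for j
    have "(\<Sum>m<n. \<i> * of_real (s m) * edge m) = 0"
      using relation by (simp add: mult.assoc flip: sum_distrib_left)
    then have dw: "w (nxt n m) - w m = \<i> * of_real (s m) * edge m" if "m < n" for m
      unfolding w_def using prefix_sum_nxt_diff that by blast
    then have "w \<in> tangent_sp n l v" by (simp add: tangent_sp_iff inner_cross_rotate)
    then have "0 = lagrangian_hessian u w" using radical by simp
    also have "\<dots> = (\<Sum>i<n. s i * \<delta> i)"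
      using edge_nonzero by (simp add: lagrangian_hessian_eq[OF u \<open>w \<in> _\<close>] dw inner_cross_rotate \<delta>_def)
    finally show ?thesis by simp
  qed
  then obtain \<mu> where \<mu>: "\<And>k. k < n \<Longrightarrow> \<delta> k = \<mu> \<bullet> edge k"
    using vanishing_on_relations_imp_inner[OF n_pos b] by blast
  have "\<forall>k<n. (u (nxt n k) - \<mu>) \<bullet> radius (nxt n k) = (u k - \<mu>) \<bullet> radius k"
    using \<mu> by (simp add: \<delta>_def inner_diff algebra_simps)
  then have "(u i - \<mu>) \<bullet> radius i = (u 0 - \<mu>) \<bullet> radius 0" if "i < n" for i
    using nxt_invariant_const[of n "\<lambda>k. (u k - \<mu>) \<bullet> radius k"] that by blast
  then show ?thesis using that by blast
qed

lemma tangent_cross_radius_diff: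
  assumes u: "u \<in> tangent_sp n l v"
    and radial: "\<And>i. i < n \<Longrightarrow> (u i - \<mu>) \<bullet> radius i = \<kappa>"
    and "i < n"
  shows "cross (radius (nxt n i)) (u (nxt n i) - \<mu>) - cross (radius i) (u i - \<mu>) = - 2 * \<kappa> * signed_tan i"
proof -
  have "edge i \<bullet> ((u (nxt n i) - \<mu>) - (u i - \<mu>)) = 0"
    using u \<open>i < n\<close> by (simp add: tangent_sp_iff)
  then have "chord_cross i * (cross (radius (nxt n i)) (u (nxt n i) - \<mu>) - cross (radius i) (u i - \<mu>))
      = chord_cross i * (- 2 * \<kappa> * signed_tan i)"
    using radial_cross_increment[OF radius_inner_self[OF \<open>i < n\<close>] radius_inner_self[OF nxt_in_range[of i]]
        radial[OF \<open>i < n\<close>] radial[OF nxt_in_range[of i]]] edge_inner_self_eq[OF \<open>i < n\<close>]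
    by (simp add: chord_cross_def) (simp add: algebra_simps)
  then show ?thesis using mult_left_cancel[OF chord_cross_nonzero[OF \<open>i < n\<close>]] by blast
qed

lemma orbit_tangent_if_radial_zero:
  assumes u: "u \<in> tangent_sp n l v"
    and radial: "\<And>i. i < n \<Longrightarrow> (u i - \<mu>) \<bullet> radius i = 0"
  shows "u \<in> orbit_tangent n v"
proof -
  define B where "B i = cross (radius i) (u i - \<mu>)" for i
  have "\<forall>i<n. B (nxt n i) = B i"
    using tangent_cross_radius_diff[OF u radial] by (simp add: B_def)
  then have B: "B i = B 0" if "i < n" for i
    using nxt_invariant_const that by blast
  define K where "K = B 0 / r\<^sup>2"
  have "u i = (\<mu> - of_real K * \<i> * ctr) + of_real K * \<i> * v i" if "i < n" for i
  proof -
    have "of_real (r\<^sup>2) * (u i - \<mu>) = \<i> * of_real (B 0) * radius i"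
      using polar_decomposition[of "radius i" "u i - \<mu>"] radius_inner_self[OF that]
        radial[OF that] B[OF that] by (simp add: B_def inner_commute)
    then show ?thesis using radius_pos by (simp add: K_def field_simps)
  qed
  then show ?thesis unfolding orbit_tangent_def by blast
qed

lemma morse_if_not_bifurcating:
  assumes "(\<Sum>i<n. signed_tan i) \<noteq> 0"
  shows "morse_critical_area n l v"
  unfolding morse_critical_area_def
proof (intro conjI exI[of _ multiplier] allI impI ballI)
  show "side_constr n l i v = 0" if "i < n" for i
    using lengths[OF that] by (simp add: side_constr_def)
  show "dderiv (poly_area n) v u = (\<Sum>i<n. multiplier i * dderiv (side_constr n l i) v u)" for u
    by (rule area_gradient)
  fix u assume u: "u \<in> tangent_sp n l v"
    and "\<forall>w\<in>tangent_sp n l v.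
      dderiv2 (poly_area n) v u w - (\<Sum>i<n. multiplier i * dderiv2 (side_constr n l i) v u w) = 0"
  then have "\<forall>w\<in>tangent_sp n l v. lagrangian_hessian u w = 0"
    by (simp add: lagrangian_hessian_def)
  then obtain \<mu> \<kappa> where radial: "\<And>i. i < n \<Longrightarrow> (u i - \<mu>) \<bullet> radius i = \<kappa>"
    using radical_radial_affine[OF u] by blast
  define B where "B i = cross (radius i) (u i - \<mu>)" for i
  have "0 = (\<Sum>i<n. B (nxt n i) - B i)"
    using sum_nxt_diff_eq_0[OF n_pos] by metis
  also have "\<dots> = - 2 * \<kappa> * (\<Sum>i<n. signed_tan i)"
    using tangent_cross_radius_diff[OF u radial] by (simp add: B_def sum_distrib_left)
  finally have "\<kappa> = 0" using assms by simp
  then show "u \<in> orbit_tangent n v"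
    using orbit_tangent_if_radial_zero[OF u] radial by blast
qed

lemma bifurcation_vector:
  assumes "(\<Sum>i<n. signed_tan i) = 0"
  obtains u where "u \<in> tangent_sp n l v" "\<And>i. i < n \<Longrightarrow> u i \<bullet> radius i = r\<^sup>2"
proof -
  define \<beta> where "\<beta> i = (\<Sum>j<i. - 2 * signed_tan j)" for i
  have "(\<Sum>j<n. - 2 * signed_tan j) = 0" using assms by (simp add: sum_negf flip: sum_distrib_left)
  then have \<beta>: "\<beta> (nxt n i) - \<beta> i = - 2 * signed_tan i" if "i < n" for i
    unfolding \<beta>_def using prefix_sum_nxt_diff that by blast
  define u where "u i = radius i + \<i> * of_real (\<beta> i) * radius i" for i
  have "edge i \<bullet> (u (nxt n i) - u i) = 0" if "i < n" for i
    using inner_edge_rotation[of "radius (nxt n i)" "radius i" "\<beta> (nxt n i)" "\<beta> i"] \<beta>[OF that]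
      edge_inner_self_eq[OF that] by (simp add: u_def chord_cross_def)
  moreover have "u i \<bullet> radius i = r\<^sup>2" if "i < n" for i
    using radius_inner_self[OF that] by (simp add: u_def inner_add_left inner_cross_rotate)
  ultimately show ?thesis using that[of u] by (simp add: tangent_sp_iff)
qed

lemma radial_const_not_in_orbit:
  assumes "u \<in> orbit_tangent n v" and radial: "\<And>i. i < n \<Longrightarrow> u i \<bullet> radius i = r\<^sup>2"
  shows False
proof -
  obtain a c where u: "\<And>i. i < n \<Longrightarrow> u i = a + of_real c * \<i> * v i"
    using assms(1) unfolding orbit_tangent_def by blast
  define A where "A = a + of_real c * \<i> * ctr"
  have A_radius: "A \<bullet> radius i = r\<^sup>2" if "i < n" for i
  proof -
    have "u i = A + \<i> * of_real c * radius i" using u[OF that] by (simp add: A_def algebra_simps)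
    then show ?thesis using radial[OF that] by (simp add: inner_add_left inner_cross_rotate)
  qed
  then have "\<forall>i<n. A \<bullet> v i = r\<^sup>2 + A \<bullet> ctr" by (simp add: algebra_simps)
  moreover have "A \<noteq> 0"
    using A_radius[OF n_pos] radius_pos by auto
  ultimately show False using collinear_if_inner_const not_collinear by blast
qed

lemma not_morse_if_bifurcating:
  assumes "(\<Sum>i<n. signed_tan i) = 0"
  shows "\<not> morse_critical_area n l v"
proof
  assume "morse_critical_area n l v"
  then obtain lam where
    grad: "\<forall>u. dderiv (poly_area n) v u = (\<Sum>i<n. lam i * dderiv (side_constr n l i) v u)" and
    radical: "\<forall>u \<in> tangent_sp n l v. (\<forall>w \<in> tangent_sp n l v.
      dderiv2 (poly_area n) v u w - (\<Sum>i<n. lam i * dderiv2 (side_constr n l i) v u w) = 0)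
        \<longrightarrow> u \<in> orbit_tangent n v"
    unfolding morse_critical_area_def by blast
  have "(\<Sum>i<n. lam i * dderiv2 (side_constr n l i) v u w) = (\<Sum>i<n. multiplier i * dderiv2 (side_constr n l i) v u w)"
    for u w using multiplier_unique[OF grad] by simp
  then have radical': "\<forall>u \<in> tangent_sp n l v. (\<forall>w \<in> tangent_sp n l v. lagrangian_hessian u w = 0)
      \<longrightarrow> u \<in> orbit_tangent n v"
    using radical by (simp add: lagrangian_hessian_def)
  obtain u where u: "u \<in> tangent_sp n l v" and radial: "\<And>i. i < n \<Longrightarrow> u i \<bullet> radius i = r\<^sup>2"
    using bifurcation_vector[OF assms] by blast
  have "lagrangian_hessian u w = 0" if "w \<in> tangent_sp n l v" for w
    using radial nxt_in_range by (simp add: lagrangian_hessian_eq[OF u that])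
  then have "u \<in> orbit_tangent n v" using radical' u by blast
  then show False using radial_const_not_in_orbit radial by blast
qed

end

theorem mainTheorem10:
  fixes n :: nat and l :: "nat \<Rightarrow> real" and v :: "nat \<Rightarrow> complex" and ctr :: complex
  assumes lengths: "\<forall>i<n. l i = cmod (v (nxt n i) - v i)"
    and pos: "\<forall>i<n. l i > 0"
    and cyc: "cyclic_with_center n v ctr"
    and no_antipodal: "\<forall>i<n. v (nxt n i) - ctr \<noteq> - (v i - ctr)"
    and not_line: "\<not> collinear (v ` {..<n})"
  shows "morse_critical_area n l v \<longleftrightarrow> \<not> bifurcating n v ctr"
proof -
  obtain r where "\<forall>i<n. cmod (v i - ctr) = r"
    using cyc unfolding cyclic_with_center_def by blast
  then interpret cyclic_polygon n l v ctr r
    using assms by unfold_locales auto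
  show ?thesis
    using bifurcating_iff morse_if_not_bifurcating not_morse_if_bifurcating by blast
qed

end
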